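(* Let $I\subseteq\mathbb{R}$ be an interval, $p\in\mathbb{N}$, $\mathbf{d}=(d_1,\dots,d_p)\in\mathbb{N}^p$, $\alpha\in\mathbb{N}_p^{\mathbf{d}}$, and let $\mathbf{M}=(M_1,\dots,M_p)$ be a $\mathbf{d}$-averaging mapping on $I$. Assume that the root graph $\mathcal{R}(G_\alpha)$ is ergodic and each $M_i$ is continuous and strict. Let $K_\alpha\colon I^p\to I$ be the mean such that $\mathbf{M}_\alpha^n\to\mathbf{K}_\alpha:=(K_\alpha,\dots,K_\alpha)$ pointwise on $I^p$ as $n\to\infty$ (which exists under these hypotheses). Then: (a) $\mathbf{K}_\alpha=\mathbf{K}_\alpha\circ\mathbf{M}_\alpha$; (b) if $M_1,\dots,M_p$ are nondecreasing in each variable, then so is $K_\alpha$; (c) if $I=(0,+\infty)$ and $M_1,\dots,M_p$ are positively homogeneous, then every iterate $\mathbf{M}_\alpha^n$ and $K_\alpha$ are positively homogeneous.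
   Context: A $k$-variable mean on an interval $I$ is a function $M\colon I^k\to I$ with $\min(x)\le M(x)\le\max(x)$ for all $x\in I^k$; it is strict if both inequalities are strict for every nonconstant $x$. Notation: $\mathbb{N}_p=\{1,\dots,p\}$, $\mathbb{N}_p^{\mathbf{d}}=\mathbb{N}_p^{d_1}\times\dots\times\mathbb{N}_p^{d_p}$. A $\mathbf{d}$-averaging mapping on $I$ is a sequence $(M_1,\dots,M_p)$ where each $M_i$ is a $d_i$-variable mean on $I$. For $\alpha=(\alpha_1,\dots,\alpha_p)\in\mathbb{N}_p^{\mathbf{d}}$, $\alpha_i=(\alpha_{i,1},\dots,\alpha_{i,d_i})$, define $\mathbf{M}_\alpha\colon I^p\to I^p$ by $\mathbf{M}_\alpha(x)=\big(M_i(x_{\alpha_{i,1}},\dots,x_{\alpha_{i,d_i}})\big)_{i=1}^p$; $\mathbf{M}_\alpha^n$ is its $n$-th iterate. The $\alpha$-incidence graph is $G_\alpha=(\mathbb{N}_p,E_\alpha)$, $E_\alpha=\{(\alpha_{i,j},i): i\in\mathbb{N}_p, j\in\mathbb{N}_{d_i}\}$. A digraph is ergodic if it is nonempty, irreducible (walks exist between any two vertices) and aperiodic (no integer $k>1$ divides the length of every cycle). The root $R(G)$ of a digraph $G$ is the union of the strongly connected components that receive no edge from another component; the root graph $\mathcal{R}(G)$ is the subgraph induced by $R(G)$. Positive homogeneity of $F$ on $(0,\infty)^k$ means $F(tx)=tF(x)$ for all $t>0$. *)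

theory Defs
  imports "HOL-Analysis.Analysis"
begin

(* Conventions: indices are 0-based. A point of I^k is encoded as a function
   x :: nat => real with x j \<in> I for j < k and x j = 0 for j >= k. *)

definition cube :: "real set \<Rightarrow> nat \<Rightarrow> (nat \<Rightarrow> real) set" where
  "cube I k = {x. (\<forall>j<k. x j \<in> I) \<and> (\<forall>j\<ge>k. x j = 0)}"

definition is_mean :: "real set \<Rightarrow> nat \<Rightarrow> ((nat \<Rightarrow> real) \<Rightarrow> real) \<Rightarrow> bool" where
  "is_mean I k M \<longleftrightarrow> (\<forall>x\<in>cube I k.
      Min (x ` {..<k}) \<le> M x \<and> M x \<le> Max (x ` {..<k}) \<and> M x \<in> I)"

definition strict_mean :: "real set \<Rightarrow> nat \<Rightarrow> ((nat \<Rightarrow> real) \<Rightarrow> real) \<Rightarrow> bool" where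
  "strict_mean I k M \<longleftrightarrow> is_mean I k M \<and> (\<forall>x\<in>cube I k.
      (\<exists>j1<k. \<exists>j2<k. x j1 \<noteq> x j2) \<longrightarrow>
        Min (x ` {..<k}) < M x \<and> M x < Max (x ` {..<k}))"

definition averaging_mapping ::
  "real set \<Rightarrow> nat \<Rightarrow> (nat \<Rightarrow> nat) \<Rightarrow> (nat \<Rightarrow> (nat \<Rightarrow> real) \<Rightarrow> real) \<Rightarrow> bool" where
  "averaging_mapping I p d M \<longleftrightarrow> (\<forall>i<p. is_mean I (d i) (M i))"

definition admissible_alpha :: "nat \<Rightarrow> (nat \<Rightarrow> nat) \<Rightarrow> (nat \<Rightarrow> nat \<Rightarrow> nat) \<Rightarrow> bool" where
  "admissible_alpha p d \<alpha> \<longleftrightarrow> (\<forall>i<p. \<forall>j<d i. \<alpha> i j < p)"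

definition M_alpha ::
  "nat \<Rightarrow> (nat \<Rightarrow> nat) \<Rightarrow> (nat \<Rightarrow> nat \<Rightarrow> nat) \<Rightarrow> (nat \<Rightarrow> (nat \<Rightarrow> real) \<Rightarrow> real)
     \<Rightarrow> (nat \<Rightarrow> real) \<Rightarrow> (nat \<Rightarrow> real)" where
  "M_alpha p d \<alpha> M x = (\<lambda>i. if i < p then M i (\<lambda>j. if j < d i then x (\<alpha> i j) else 0) else 0)"

(* incidence graph G_alpha: vertices {..<p}, edges (alpha i j, i) *)
definition incidence_edges :: "nat \<Rightarrow> (nat \<Rightarrow> nat) \<Rightarrow> (nat \<Rightarrow> nat \<Rightarrow> nat) \<Rightarrow> (nat \<times> nat) set" where
  "incidence_edges p d \<alpha> = {(\<alpha> i j, i) | i j. i < p \<and> j < d i}"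

(* root of a digraph (V,E): union of strongly connected components receiving
   no edge from another component, i.e. vertices v such that every vertex
   reaching v is reachable from v *)
definition graph_root :: "'a set \<Rightarrow> ('a \<times> 'a) set \<Rightarrow> 'a set" where
  "graph_root V E = {v\<in>V. \<forall>u\<in>V. (u, v) \<in> E\<^sup>* \<longrightarrow> (v, u) \<in> E\<^sup>*}"

definition induced_edges :: "'a set \<Rightarrow> ('a \<times> 'a) set \<Rightarrow> ('a \<times> 'a) set" where
  "induced_edges V E = E \<inter> (V \<times> V)"

definition irreducible_graph :: "'a set \<Rightarrow> ('a \<times> 'a) set \<Rightarrow> bool" where
  "irreducible_graph V E \<longleftrightarrow> (\<forall>u\<in>V. \<forall>v\<in>V. (u, v) \<in> E\<^sup>*)"

definition cycle_lengths :: "'a set \<Rightarrow> ('a \<times> 'a) set \<Rightarrow> nat set" where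
  "cycle_lengths V E = {n. n > 0 \<and> (\<exists>v\<in>V. (v, v) \<in> E ^^ n)}"

definition aperiodic_graph :: "'a set \<Rightarrow> ('a \<times> 'a) set \<Rightarrow> bool" where
  "aperiodic_graph V E \<longleftrightarrow> \<not> (\<exists>k::nat. k > 1 \<and> (\<forall>n\<in>cycle_lengths V E. k dvd n))"

definition ergodic_graph :: "'a set \<Rightarrow> ('a \<times> 'a) set \<Rightarrow> bool" where
  "ergodic_graph V E \<longleftrightarrow> V \<noteq> {} \<and> E \<subseteq> V \<times> V \<and> irreducible_graph V E \<and> aperiodic_graph V E"

definition root_graph_ergodic :: "'a set \<Rightarrow> ('a \<times> 'a) set \<Rightarrow> bool" where
  "root_graph_ergodic V E \<longleftrightarrow>
     ergodic_graph (graph_root V E) (induced_edges (graph_root V E) E)"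

definition nondecreasing_mean :: "real set \<Rightarrow> nat \<Rightarrow> ((nat \<Rightarrow> real) \<Rightarrow> real) \<Rightarrow> bool" where
  "nondecreasing_mean I k M \<longleftrightarrow>
     (\<forall>x\<in>cube I k. \<forall>y\<in>cube I k. (\<forall>j<k. x j \<le> y j) \<longrightarrow> M x \<le> M y)"

definition pos_homogeneous :: "nat \<Rightarrow> ((nat \<Rightarrow> real) \<Rightarrow> real) \<Rightarrow> bool" where
  "pos_homogeneous k F \<longleftrightarrow>
     (\<forall>x\<in>cube {0<..} k. \<forall>t>0. F (\<lambda>j. t * x j) = t * F x)"

end

theory Submission
  imports Defs "HOL-Library.While_Combinator"
begin

(* K x is the common limit of the coordinates of the orbit M_alpha^n x. Part (a) holds because
   the orbit of M_alpha x is the orbit of x shifted by one step. For (b) and (c), M_alpha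
   preserves the componentwise order, respectively commutes with scaling by t > 0; so does every
   iterate, and both properties pass to the limit. *)

lemma funpow_in_invariant_set:
  assumes "f ` S \<subseteq> S" "x \<in> S"
  shows "(f ^^ n) x \<in> S"
  using assms by (induction n) auto

lemma funpow_preserves_relation:
  assumes maps: "f ` S \<subseteq> S"
    and preserves: "\<And>x y. x \<in> S \<Longrightarrow> y \<in> S \<Longrightarrow> R x y \<Longrightarrow> R (f x) (f y)"
    and "x \<in> S" "y \<in> S" "R x y"
  shows "R ((f ^^ n) x) ((f ^^ n) y)"
proof (induction n)
  case 0
  then show ?case using \<open>R x y\<close> by simp
next
  case (Suc n)
  then show ?case
    using preserves funpow_in_invariant_set[OF maps] \<open>x \<in> S\<close> \<open>y \<in> S\<close> by simp
qed

lemma tendsto_iterates_invariant: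
  fixes K :: "'a \<Rightarrow> 'b::t2_space"
  assumes maps: "f ` S \<subseteq> S" and "x \<in> S"
    and lim: "\<And>x. x \<in> S \<Longrightarrow> (\<lambda>n. g ((f ^^ n) x)) \<longlonglongrightarrow> K x"
  shows "K (f x) = K x"
proof -
  have "(\<lambda>n. g ((f ^^ Suc n) x)) \<longlonglongrightarrow> K x"
    using LIMSEQ_Suc[OF lim[OF \<open>x \<in> S\<close>]] .
  then have "(\<lambda>n. g ((f ^^ n) (f x))) \<longlonglongrightarrow> K x"
    by (simp only: funpow_Suc_right comp_apply)
  moreover have "(\<lambda>n. g ((f ^^ n) (f x))) \<longlonglongrightarrow> K (f x)"
    using lim maps \<open>x \<in> S\<close> by blast
  ultimately show ?thesis
    using LIMSEQ_unique by blast
qed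

lemma M_alpha_argument_in_cube:
  assumes "admissible_alpha p d \<alpha>" "x \<in> cube I p" "i < p"
  shows "(\<lambda>j. if j < d i then x (\<alpha> i j) else 0) \<in> cube I (d i)"
  using assms unfolding cube_def admissible_alpha_def by auto

lemma M_alpha_maps_cube:
  assumes alpha: "admissible_alpha p d \<alpha>" and avg: "averaging_mapping I p d M"
  shows "M_alpha p d \<alpha> M ` cube I p \<subseteq> cube I p"
proof
  fix y assume "y \<in> M_alpha p d \<alpha> M ` cube I p"
  then obtain x where x: "x \<in> cube I p" and y: "y = M_alpha p d \<alpha> M x" by blast
  have "M i (\<lambda>j. if j < d i then x (\<alpha> i j) else 0) \<in> I" if "i < p" for i
    using avg M_alpha_argument_in_cube[OF alpha x that] that
    unfolding averaging_mapping_def is_mean_def by blast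
  then show "y \<in> cube I p"
    unfolding y cube_def M_alpha_def by simp
qed

lemma M_alpha_mono:
  assumes alpha: "admissible_alpha p d \<alpha>"
    and nd: "\<forall>i<p. nondecreasing_mean I (d i) (M i)"
    and x: "x \<in> cube I p" and y: "y \<in> cube I p" and le: "\<forall>j<p. x j \<le> y j"
  shows "\<forall>i<p. M_alpha p d \<alpha> M x i \<le> M_alpha p d \<alpha> M y i"
proof (intro allI impI)
  fix i assume i: "i < p"
  have "\<forall>j<d i. (if j < d i then x (\<alpha> i j) else 0) \<le> (if j < d i then y (\<alpha> i j) else 0)"
    using alpha le i unfolding admissible_alpha_def by simp
  then show "M_alpha p d \<alpha> M x i \<le> M_alpha p d \<alpha> M y i"
    using nd i M_alpha_argument_in_cube[OF alpha x i] M_alpha_argument_in_cube[OF alpha y i]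
    unfolding nondecreasing_mean_def M_alpha_def by simp
qed

lemma M_alpha_scale:
  assumes alpha: "admissible_alpha p d \<alpha>"
    and hom: "\<forall>i<p. pos_homogeneous (d i) (M i)"
    and x: "x \<in> cube {0<..} p" and t: "t > 0"
  shows "M_alpha p d \<alpha> M (\<lambda>j. t * x j) = (\<lambda>i. t * M_alpha p d \<alpha> M x i)"
proof
  fix i
  show "M_alpha p d \<alpha> M (\<lambda>j. t * x j) i = t * M_alpha p d \<alpha> M x i"
  proof (cases "i < p")
    case True
    have "(\<lambda>j. if j < d i then t * x (\<alpha> i j) else 0)
        = (\<lambda>j. t * (if j < d i then x (\<alpha> i j) else 0))"
      by auto
    then show ?thesis
      using hom M_alpha_argument_in_cube[OF alpha x True] t True
      unfolding M_alpha_def pos_homogeneous_def by simp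
  qed (simp add: M_alpha_def)
qed

lemma funpow_M_alpha_mono:
  assumes alpha: "admissible_alpha p d \<alpha>" and avg: "averaging_mapping I p d M"
    and nd: "\<forall>i<p. nondecreasing_mean I (d i) (M i)"
    and "x \<in> cube I p" "y \<in> cube I p" "\<forall>j<p. x j \<le> y j"
  shows "\<forall>i<p. ((M_alpha p d \<alpha> M) ^^ n) x i \<le> ((M_alpha p d \<alpha> M) ^^ n) y i"
  using funpow_preserves_relation[OF M_alpha_maps_cube[OF alpha avg], of "\<lambda>x y. \<forall>j<p. x j \<le> y j"]
    M_alpha_mono[OF alpha nd] assms(4-6)
  by blast

lemma funpow_M_alpha_scale:
  assumes alpha: "admissible_alpha p d \<alpha>" and avg: "averaging_mapping {0<..} p d M"
    and hom: "\<forall>i<p. pos_homogeneous (d i) (M i)"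
    and x: "x \<in> cube {0<..} p" and t: "t > 0"
  shows "((M_alpha p d \<alpha> M) ^^ n) (\<lambda>j. t * x j) = (\<lambda>i. t * ((M_alpha p d \<alpha> M) ^^ n) x i)"
proof -
  have "M_alpha p d \<alpha> M (\<lambda>j. t * ((M_alpha p d \<alpha> M ^^ k) x) j)
      = (\<lambda>i. t * M_alpha p d \<alpha> M ((M_alpha p d \<alpha> M ^^ k) x) i)" for k
    using M_alpha_scale[OF alpha hom funpow_in_invariant_set[OF M_alpha_maps_cube[OF alpha avg] x] t] .
  then show ?thesis
    using funpow_commute[where f = "\<lambda>y j. t * y j" and c = "M_alpha p d \<alpha> M"] by metis
qed

lemma nondecreasing_limit_of_M_alpha_iterates:
  assumes alpha: "admissible_alpha p d \<alpha>" and avg: "averaging_mapping I p d M"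
    and nd: "\<forall>i<p. nondecreasing_mean I (d i) (M i)" and "i < p"
    and lim: "\<forall>x\<in>cube I p. (\<lambda>n. ((M_alpha p d \<alpha> M) ^^ n) x i) \<longlonglongrightarrow> K x"
  shows "nondecreasing_mean I p K"
  unfolding nondecreasing_mean_def
proof (intro ballI impI)
  fix x y assume x: "x \<in> cube I p" and y: "y \<in> cube I p" and le: "\<forall>j<p. x j \<le> y j"
  have "((M_alpha p d \<alpha> M) ^^ n) x i \<le> ((M_alpha p d \<alpha> M) ^^ n) y i" for n
    using funpow_M_alpha_mono[OF alpha avg nd x y le] \<open>i < p\<close> by blast
  then show "K x \<le> K y"
    using LIMSEQ_le lim x y by blast
qed

lemma pos_homogeneous_limit_of_M_alpha_iterates:
  assumes alpha: "admissible_alpha p d \<alpha>" and avg: "averaging_mapping {0<..} p d M"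
    and hom: "\<forall>i<p. pos_homogeneous (d i) (M i)"
    and lim: "\<forall>x\<in>cube {0<..} p. (\<lambda>n. ((M_alpha p d \<alpha> M) ^^ n) x i) \<longlonglongrightarrow> K x"
  shows "pos_homogeneous p K"
  unfolding pos_homogeneous_def
proof (intro ballI allI impI)
  fix x and t :: real assume x: "x \<in> cube {0<..} p" and t: "t > 0"
  have "(\<lambda>j. t * x j) \<in> cube {0<..} p"
    using x t unfolding cube_def by simp
  then have "(\<lambda>n. ((M_alpha p d \<alpha> M) ^^ n) (\<lambda>j. t * x j) i) \<longlonglongrightarrow> K (\<lambda>j. t * x j)"
    using lim by blast
  then have "(\<lambda>n. t * ((M_alpha p d \<alpha> M) ^^ n) x i) \<longlonglongrightarrow> K (\<lambda>j. t * x j)"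
    by (simp add: funpow_M_alpha_scale[OF alpha avg hom x t])
  moreover have "(\<lambda>n. t * ((M_alpha p d \<alpha> M) ^^ n) x i) \<longlonglongrightarrow> t * K x"
    using lim x by (simp add: tendsto_mult_left)
  ultimately show "K (\<lambda>j. t * x j) = t * K x"
    using LIMSEQ_unique by blast
qed

theorem corollary3p2:
  fixes I :: "real set" and p :: nat and d :: "nat \<Rightarrow> nat"
    and \<alpha> :: "nat \<Rightarrow> nat \<Rightarrow> nat"
    and M :: "nat \<Rightarrow> (nat \<Rightarrow> real) \<Rightarrow> real"
    and K :: "(nat \<Rightarrow> real) \<Rightarrow> real"
  assumes I: "is_interval I"
    and p: "p \<ge> 1"
    and d: "\<forall>i<p. d i \<ge> 1"
    and alpha: "admissible_alpha p d \<alpha>"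
    and avg: "averaging_mapping I p d M"
    and erg: "root_graph_ergodic {..<p} (incidence_edges p d \<alpha>)"
    and cont: "\<forall>i<p. continuous_on (cube I (d i)) (M i)"
    and strict: "\<forall>i<p. strict_mean I (d i) (M i)"
    and K: "\<forall>x\<in>cube I p. \<forall>i<p.
              (\<lambda>n. ((M_alpha p d \<alpha> M) ^^ n) x i) \<longlonglongrightarrow> K x"
  shows "(\<forall>x\<in>cube I p. K (M_alpha p d \<alpha> M x) = K x)
    \<and> ((\<forall>i<p. nondecreasing_mean I (d i) (M i)) \<longrightarrow> nondecreasing_mean I p K)
    \<and> ((I = {0<..} \<and> (\<forall>i<p. pos_homogeneous (d i) (M i))) \<longrightarrow>
         (\<forall>n. \<forall>x\<in>cube I p. \<forall>t>0. \<forall>i<p.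
             ((M_alpha p d \<alpha> M) ^^ n) (\<lambda>j. t * x j) i = t * ((M_alpha p d \<alpha> M) ^^ n) x i)
         \<and> pos_homogeneous p K)"
proof -
  (* Ergodicity, continuity and strictness only serve to make K exist; here K is given. *)
  have "0 < p" using p by simp
  have maps: "M_alpha p d \<alpha> M ` cube I p \<subseteq> cube I p"
    using M_alpha_maps_cube[OF alpha avg] .
  have lim0: "\<And>x. x \<in> cube I p \<Longrightarrow> (\<lambda>n. ((M_alpha p d \<alpha> M) ^^ n) x 0) \<longlonglongrightarrow> K x"
    using K \<open>0 < p\<close> by blast
  show ?thesis
  proof (intro conjI impI ballI)
    show "K (M_alpha p d \<alpha> M x) = K x" if "x \<in> cube I p" for x
      using tendsto_iterates_invariant[where g = "\<lambda>y. y 0", OF maps that lim0] .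
    show "nondecreasing_mean I p K" if "\<forall>i<p. nondecreasing_mean I (d i) (M i)"
      using nondecreasing_limit_of_M_alpha_iterates[OF alpha avg that \<open>0 < p\<close>] lim0 by blast
  next
    assume "I = {0<..} \<and> (\<forall>i<p. pos_homogeneous (d i) (M i))"
    then have half_line: "I = {0<..}" and hom: "\<forall>i<p. pos_homogeneous (d i) (M i)" by auto
    show "\<forall>n. \<forall>x\<in>cube I p. \<forall>t>0. \<forall>i<p.
        ((M_alpha p d \<alpha> M) ^^ n) (\<lambda>j. t * x j) i = t * ((M_alpha p d \<alpha> M) ^^ n) x i"
      using funpow_M_alpha_scale[OF alpha avg[unfolded half_line] hom] half_line by simp
    show "pos_homogeneous p K"
      using pos_homogeneous_limit_of_M_alpha_iterates[OF alpha avg[unfolded half_line] hom] lim0 half_line by blast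
  qed
qed

end
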